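(* Let $\mathfrak{g}_1,\dots,\mathfrak{g}_t$ be nilpotent Lie algebras. Then (1) $\mathfrak{g}_1\underline{\times}\mathfrak{g}_2\cong\mathfrak{g}_2\underline{\times}\mathfrak{g}_1$; and (2) $(\mathfrak{g}_1\underline{\times}\mathfrak{g}_2\underline{\times}\cdots\underline{\times}\mathfrak{g}_{t-1})\underline{\times}\mathfrak{g}_t\cong\mathfrak{g}_1\underline{\times}(\mathfrak{g}_2\underline{\times}\mathfrak{g}_3\underline{\times}\cdots\underline{\times}\mathfrak{g}_t)$, where an unparenthesized iterated product is formed from left to right, $\mathfrak{h}_1\underline{\times}\cdots\underline{\times}\mathfrak{h}_k=(\mathfrak{h}_1\underline{\times}\cdots\underline{\times}\mathfrak{h}_{k-1})\underline{\times}\mathfrak{h}_k$.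
   Context: All Lie algebras are finite-dimensional, complex, nilpotent and nonabelian; $C^1\mathfrak{g}=[\mathfrak{g},\mathfrak{g}]$. Product by generators: for $\mathfrak{g}_1,\mathfrak{g}_2$ of dimensions $m_1,m_2$ take bases $\{X_1,\dots,X_{m_1}\}$, $\{X'_1,\dots,X'_{m_2}\}$ such that $X_1,\dots,X_{n_1}$ generate $\mathfrak{g}_1$ and $X_{n_1+1},\dots,X_{m_1}$ span $C^1\mathfrak{g}_1$, and similarly for $\mathfrak{g}_2$ with $n_2$ generators. Then $\mathfrak{g}_1\underline{\times}\mathfrak{g}_2$ is the Lie algebra on $\mathfrak{g}_1\oplus\mathfrak{g}_2\oplus\langle Z_1,\dots,Z_{n_1n_2}\rangle$ with the brackets of $\mathfrak{g}_1$ and of $\mathfrak{g}_2$, $[X_i,X'_j]=Z_{(i-1)n_2+j}$ for $1\le i\le n_1$, $1\le j\le n_2$, $[X_i,X'_j]=0$ if $i>n_1$ or $j>n_2$, and the $Z_k$ central. In $\mathfrak{g}_1\underline{\times}\mathfrak{g}_2$ the generators $X_1,\dots,X_{n_1},X'_1,\dots,X'_{n_2}$ are used, the remaining basis vectors (including the $Z_k$) spanning its derived algebra. *)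

theory Defs
  imports Complex_Main "HOL-Library.Function_Algebras"
begin

text \<open>A finite-dimensional complex Lie algebra presented by an ordered basis
  e_0, ..., e_(dim-1) and structure constants: lsc i j k is the coefficient of
  e_k in [e_i, e_j].  The field lgen records the number n of generators of the
  adapted basis: e_0..e_(n-1) generate, e_n..e_(dim-1) span the derived algebra.\<close>

record liealg =
  ldim :: nat
  lgen :: nat
  lsc  :: "nat \<Rightarrow> nat \<Rightarrow> nat \<Rightarrow> complex"

definition lvecs :: "liealg \<Rightarrow> (nat \<Rightarrow> complex) set" where
  "lvecs L = {x. \<forall>k. ldim L \<le> k \<longrightarrow> x k = 0}"

definition lbasis :: "nat \<Rightarrow> nat \<Rightarrow> complex" where
  "lbasis i = (\<lambda>k. if k = i then 1 else 0)"

definition lbr :: "liealg \<Rightarrow> (nat \<Rightarrow> complex) \<Rightarrow> (nat \<Rightarrow> complex) \<Rightarrow> nat \<Rightarrow> complex" where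
  "lbr L x y = (\<lambda>k. if k < ldim L then
      (\<Sum>i<ldim L. \<Sum>j<ldim L. x i * y j * lsc L i j k) else 0)"

definition cscale :: "complex \<Rightarrow> (nat \<Rightarrow> complex) \<Rightarrow> nat \<Rightarrow> complex" where
  "cscale c x = (\<lambda>k. c * x k)"

definition cspan :: "(nat \<Rightarrow> complex) set \<Rightarrow> (nat \<Rightarrow> complex) set" where
  "cspan S = {v. \<exists>F a. finite F \<and> F \<subseteq> S \<and> v = (\<Sum>u\<in>F. cscale (a u) u)}"

fun lcs :: "liealg \<Rightarrow> nat \<Rightarrow> (nat \<Rightarrow> complex) set" where
  "lcs L 0 = lvecs L"
| "lcs L (Suc i) = cspan {lbr L x y | x y. x \<in> lvecs L \<and> y \<in> lcs L i}"

definition is_lie_algebra :: "liealg \<Rightarrow> bool" where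
  "is_lie_algebra L \<longleftrightarrow>
     (\<forall>i j k. ldim L \<le> i \<or> ldim L \<le> j \<or> ldim L \<le> k \<longrightarrow> lsc L i j k = 0)
   \<and> (\<forall>x\<in>lvecs L. lbr L x x = 0)
   \<and> (\<forall>x\<in>lvecs L. \<forall>y\<in>lvecs L. \<forall>z\<in>lvecs L.
        lbr L x (lbr L y z) + lbr L y (lbr L z x) + lbr L z (lbr L x y) = 0)"

definition lie_nilpotent :: "liealg \<Rightarrow> bool" where
  "lie_nilpotent L \<longleftrightarrow> (\<exists>k. lcs L k = {0})"

definition lie_nonabelian :: "liealg \<Rightarrow> bool" where
  "lie_nonabelian L \<longleftrightarrow> (\<exists>x\<in>lvecs L. \<exists>y\<in>lvecs L. lbr L x y \<noteq> 0)"

definition adapted_basis :: "liealg \<Rightarrow> bool" where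
  "adapted_basis L \<longleftrightarrow> lgen L \<le> ldim L \<and>
     cspan {lbasis k | k. lgen L \<le> k \<and> k < ldim L} = lcs L 1"

definition good_nilpotent :: "liealg \<Rightarrow> bool" where
  "good_nilpotent L \<longleftrightarrow> is_lie_algebra L \<and> lie_nilpotent L \<and> lie_nonabelian L
     \<and> adapted_basis L"

definition lie_iso :: "liealg \<Rightarrow> liealg \<Rightarrow> bool" where
  "lie_iso L1 L2 \<longleftrightarrow> (\<exists>f. bij_betw f (lvecs L1) (lvecs L2)
     \<and> (\<forall>x\<in>lvecs L1. \<forall>y\<in>lvecs L1. f (x + y) = f x + f y)
     \<and> (\<forall>c. \<forall>x\<in>lvecs L1. f (cscale c x) = cscale c (f x))
     \<and> (\<forall>x\<in>lvecs L1. \<forall>y\<in>lvecs L1. f (lbr L1 x y) = lbr L2 (f x) (f y)))"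

text \<open>Basis of the product by generators g1 x g2, ordered as
  X_1..X_n1, X'_1..X'_n2, X_(n1+1)..X_m1, X'_(n2+1)..X'_m2, Z_1..Z_(n1 n2).\<close>
datatype pidx = P1 nat | P2 nat | PZ nat nat | PNone

definition pdecode :: "liealg \<Rightarrow> liealg \<Rightarrow> nat \<Rightarrow> pidx" where
  "pdecode L1 L2 p = (let m1 = ldim L1; n1 = lgen L1; m2 = ldim L2; n2 = lgen L2 in
     if p < n1 then P1 p
     else if p < n1 + n2 then P2 (p - n1)
     else if p < m1 + n2 then P1 (p - n2)
     else if p < m1 + m2 then P2 (p - m1)
     else if p < m1 + m2 + n1 * n2 then PZ ((p - m1 - m2) div n2) ((p - m1 - m2) mod n2)
     else PNone)"

definition gprod :: "liealg \<Rightarrow> liealg \<Rightarrow> liealg" where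
  "gprod L1 L2 = \<lparr> ldim = ldim L1 + ldim L2 + lgen L1 * lgen L2,
     lgen = lgen L1 + lgen L2,
     lsc = (\<lambda>p q r. case (pdecode L1 L2 p, pdecode L1 L2 q, pdecode L1 L2 r) of
         (P1 i, P1 j, P1 k) \<Rightarrow> lsc L1 i j k
       | (P2 i, P2 j, P2 k) \<Rightarrow> lsc L2 i j k
       | (P1 i, P2 j, PZ a b) \<Rightarrow>
           (if i < lgen L1 \<and> j < lgen L2 \<and> a = i \<and> b = j then 1 else 0)
       | (P2 j, P1 i, PZ a b) \<Rightarrow>
           (if i < lgen L1 \<and> j < lgen L2 \<and> a = i \<and> b = j then -1 else 0)
       | _ \<Rightarrow> 0) \<rparr>"

definition iprod :: "liealg list \<Rightarrow> liealg" where
  "iprod Ls = foldl gprod (hd Ls) (tl Ls)"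

end

theory Submission
  imports Defs
begin

text \<open>Both isomorphisms are monomial: they permute the adapted basis up to nonzero
  scalars and keep generators among generators.  For (1) exchange X_i with X'_i and
  send Z_ij to -Z'_ji, because [X_i, X'_j] = -[X'_j, X_i].  For (2), the bases of
  (g1 x g2) x g3 and g1 x (g2 x g3) both consist of the generators and derived parts
  of the three factors together with one central element for each pair of generators
  from two different factors, and the brackets agree.  A monomial isomorphism
  g1 = g1' induces one g1 x g2 = g1' x g2, so (2) follows by induction on t.\<close>

lemma mult_add_less_mult:
  fixes a b m n :: nat
  assumes "a < m" "b < n"
  shows "a * n + b < m * n"
proof -
  have "Suc a * n \<le> m * n" using assms(1) by (intro mult_le_mono1) simp
  then show ?thesis using assms(2) by simp
qed

lemma ldim_gprod [simp]: "ldim (gprod L1 L2) = ldim L1 + ldim L2 + lgen L1 * lgen L2"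
  by (simp add: gprod_def)

lemma lgen_gprod [simp]: "lgen (gprod L1 L2) = lgen L1 + lgen L2"
  by (simp add: gprod_def)

fun pidx_valid :: "liealg \<Rightarrow> liealg \<Rightarrow> pidx \<Rightarrow> bool" where
  "pidx_valid L1 L2 (P1 i) \<longleftrightarrow> i < ldim L1"
| "pidx_valid L1 L2 (P2 j) \<longleftrightarrow> j < ldim L2"
| "pidx_valid L1 L2 (PZ a b) \<longleftrightarrow> a < lgen L1 \<and> b < lgen L2"
| "pidx_valid L1 L2 PNone \<longleftrightarrow> False"

fun pencode :: "liealg \<Rightarrow> liealg \<Rightarrow> pidx \<Rightarrow> nat" where
  "pencode L1 L2 (P1 i) = (if i < lgen L1 then i else i + lgen L2)"
| "pencode L1 L2 (P2 j) = (if j < lgen L2 then lgen L1 + j else ldim L1 + j)"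
| "pencode L1 L2 (PZ a b) = ldim L1 + ldim L2 + a * lgen L2 + b"
| "pencode L1 L2 PNone = ldim L1 + ldim L2 + lgen L1 * lgen L2"

fun pidx_is_gen :: "liealg \<Rightarrow> liealg \<Rightarrow> pidx \<Rightarrow> bool" where
  "pidx_is_gen L1 L2 (P1 i) \<longleftrightarrow> i < lgen L1"
| "pidx_is_gen L1 L2 (P2 j) \<longleftrightarrow> j < lgen L2"
| "pidx_is_gen L1 L2 _ \<longleftrightarrow> False"

definition gprod_sc :: "liealg \<Rightarrow> liealg \<Rightarrow> pidx \<Rightarrow> pidx \<Rightarrow> pidx \<Rightarrow> complex" where
  "gprod_sc L1 L2 x y z = (case (x, y, z) of
         (P1 i, P1 j, P1 k) \<Rightarrow> lsc L1 i j k
       | (P2 i, P2 j, P2 k) \<Rightarrow> lsc L2 i j k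
       | (P1 i, P2 j, PZ a b) \<Rightarrow>
           (if i < lgen L1 \<and> j < lgen L2 \<and> a = i \<and> b = j then 1 else 0)
       | (P2 j, P1 i, PZ a b) \<Rightarrow>
           (if i < lgen L1 \<and> j < lgen L2 \<and> a = i \<and> b = j then -1 else 0)
       | _ \<Rightarrow> 0)"

lemma lsc_gprod:
  "lsc (gprod L1 L2) p q r = gprod_sc L1 L2 (pdecode L1 L2 p) (pdecode L1 L2 q) (pdecode L1 L2 r)"
  by (simp add: gprod_def gprod_sc_def)

context
  fixes L1 L2 :: liealg
  assumes gen_le_dim1: "lgen L1 \<le> ldim L1" and gen_le_dim2: "lgen L2 \<le> ldim L2"
begin

lemma pdecode_pencode:
  assumes "pidx_valid L1 L2 l"
  shows "pdecode L1 L2 (pencode L1 L2 l) = l"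
proof (cases l)
  case (PZ a b)
  with assms have "a * lgen L2 + b < lgen L1 * lgen L2" by (simp add: mult_add_less_mult)
  with PZ assms gen_le_dim1 gen_le_dim2 show ?thesis by (auto simp: pdecode_def Let_def)
qed (use assms gen_le_dim1 gen_le_dim2 in \<open>auto simp: pdecode_def Let_def\<close>)

lemma pencode_less_ldim:
  assumes "pidx_valid L1 L2 l"
  shows "pencode L1 L2 l < ldim (gprod L1 L2)"
proof (cases l)
  case (PZ a b)
  with assms have "a * lgen L2 + b < lgen L1 * lgen L2" by (simp add: mult_add_less_mult)
  with PZ show ?thesis by simp
qed (use assms gen_le_dim1 gen_le_dim2 in auto)

lemma pdecode_valid_inverse:
  assumes "p < ldim (gprod L1 L2)"
  shows "pidx_valid L1 L2 (pdecode L1 L2 p) \<and> pencode L1 L2 (pdecode L1 L2 p) = p"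
proof (cases "p < ldim L1 + ldim L2")
  case True
  then show ?thesis using gen_le_dim1 gen_le_dim2 by (auto simp: pdecode_def Let_def)
next
  case False
  define z where "z = p - ldim L1 - ldim L2"
  have z: "z < lgen L1 * lgen L2" using assms False by (simp add: z_def)
  then have "0 < lgen L2" by (cases "lgen L2") auto
  moreover have "z div lgen L2 < lgen L1" using z by (simp add: less_mult_imp_div_less)
  moreover have "p = ldim L1 + ldim L2 + z div lgen L2 * lgen L2 + z mod lgen L2"
    using False by (simp add: z_def)
  ultimately show ?thesis using False z gen_le_dim1 gen_le_dim2
    by (auto simp: pdecode_def Let_def z_def[symmetric])
qed

lemma pencode_inj_iff:
  assumes "pidx_valid L1 L2 l" "pidx_valid L1 L2 l'"
  shows "pencode L1 L2 l = pencode L1 L2 l' \<longleftrightarrow> l = l'"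
  using pdecode_pencode[OF assms(1)] pdecode_pencode[OF assms(2)] by metis

lemma bij_betw_pencode:
  "bij_betw (pencode L1 L2) {l. pidx_valid L1 L2 l} {..<ldim (gprod L1 L2)}"
  by (rule bij_betw_byWitness[where f' = "pdecode L1 L2"])
    (use pdecode_pencode pdecode_valid_inverse pencode_less_ldim in auto)

lemma pencode_less_lgen_iff:
  assumes "pidx_valid L1 L2 l"
  shows "pencode L1 L2 l < lgen L1 + lgen L2 \<longleftrightarrow> pidx_is_gen L1 L2 l"
  using assms gen_le_dim1 gen_le_dim2 by (cases l) auto

lemma lsc_gprod_pencode:
  assumes "pidx_valid L1 L2 a" "pidx_valid L1 L2 b" "pidx_valid L1 L2 c"
  shows "lsc (gprod L1 L2) (pencode L1 L2 a) (pencode L1 L2 b) (pencode L1 L2 c)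
    = gprod_sc L1 L2 a b c"
  using assms by (simp add: lsc_gprod pdecode_pencode)

end

text \<open>\<pi> and s describe the linear map e_i \<mapsto> s i \<cdot> e'_(\<pi> i), which sends
  generators to generators.\<close>

definition monomial_iso :: "liealg \<Rightarrow> liealg \<Rightarrow> bool" where
  "monomial_iso L L' \<longleftrightarrow> ldim L = ldim L' \<and> lgen L = lgen L' \<and>
    (\<exists>\<pi> s. bij_betw \<pi> {..<ldim L} {..<ldim L} \<and>
       (\<forall>i<ldim L. (\<pi> i < lgen L \<longleftrightarrow> i < lgen L) \<and> s i \<noteq> 0) \<and>
       (\<forall>i<ldim L. \<forall>j<ldim L. \<forall>k<ldim L.
          s i * s j * lsc L' (\<pi> i) (\<pi> j) (\<pi> k) = s k * lsc L i j k))"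

definition monomial_map ::
    "nat \<Rightarrow> (nat \<Rightarrow> nat) \<Rightarrow> (nat \<Rightarrow> complex) \<Rightarrow> (nat \<Rightarrow> complex) \<Rightarrow> nat \<Rightarrow> complex" where
  "monomial_map n \<pi> s x =
     (\<lambda>k. if k < n then s (inv_into {..<n} \<pi> k) * x (inv_into {..<n} \<pi> k) else 0)"

lemma monomial_map_apply:
  assumes "bij_betw \<pi> {..<n} {..<n}" "i < n"
  shows "monomial_map n \<pi> s x (\<pi> i) = s i * x i"
  using assms bij_betw_apply[OF assms(1), of i]
  by (simp add: monomial_map_def bij_betw_imp_inj_on inv_into_f_f)

lemma bij_betw_monomial_map:
  assumes bij: "bij_betw \<pi> {..<n} {..<n}" and nonzero: "\<forall>i<n. s i \<noteq> 0"
  shows "bij_betw (monomial_map n \<pi> s) {x. \<forall>k\<ge>n. x k = 0} {x. \<forall>k\<ge>n. x k = 0}"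
proof (rule bij_betw_byWitness[where f' = "\<lambda>y i. if i < n then y (\<pi> i) / s i else 0"])
  have inv_less: "k < n \<Longrightarrow> inv_into {..<n} \<pi> k < n" for k
    using bij_betw_apply[OF bij_betw_inv_into[OF bij]] by simp
  have "k < n \<Longrightarrow> \<pi> (inv_into {..<n} \<pi> k) = k" for k
    using bij by (simp add: bij_betw_inv_into_right)
  then show "\<forall>y\<in>{x. \<forall>k\<ge>n. x k = 0}.
      monomial_map n \<pi> s (\<lambda>i. if i < n then y (\<pi> i) / s i else 0) = y"
    using nonzero inv_less by (auto simp: monomial_map_def fun_eq_iff)
  show "\<forall>x\<in>{x. \<forall>k\<ge>n. x k = 0}.
      (\<lambda>i. if i < n then monomial_map n \<pi> s x (\<pi> i) / s i else 0) = x"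
    using nonzero monomial_map_apply[OF bij] by (auto simp: fun_eq_iff)
qed (auto simp: monomial_map_def)

lemma lbr_monomial_map:
  assumes bij: "bij_betw \<pi> {..<ldim L} {..<ldim L}" and dim: "ldim L' = ldim L"
    and sc: "\<forall>i<ldim L. \<forall>j<ldim L. \<forall>k<ldim L.
               s i * s j * lsc L' (\<pi> i) (\<pi> j) (\<pi> k) = s k * lsc L i j k"
  shows "lbr L' (monomial_map (ldim L) \<pi> s x) (monomial_map (ldim L) \<pi> s y)
    = monomial_map (ldim L) \<pi> s (lbr L x y)"
proof
  fix k
  define n where "n = ldim L"
  let ?f = "monomial_map n \<pi> s"
  show "lbr L' (?f x) (?f y) k = ?f (lbr L x y) k"
  proof (cases "k < n")
    case False
    then show ?thesis using dim by (simp add: lbr_def monomial_map_def n_def)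
  next
    case True
    then obtain m where m: "m < n" "k = \<pi> m"
      using bij by (metis bij_betw_imp_surj_on imageE lessThan_iff n_def)
    have reindex: "(\<Sum>i<n. G (\<pi> i)) = (\<Sum>i<n. G i)" for G :: "nat \<Rightarrow> complex"
      using sum.reindex_bij_betw[OF bij] by (simp add: n_def)
    have "lbr L' (?f x) (?f y) k = (\<Sum>i<n. \<Sum>j<n. ?f x i * ?f y j * lsc L' i j (\<pi> m))"
      using True m dim by (simp add: lbr_def n_def)
    also have "\<dots> = (\<Sum>i<n. \<Sum>j<n. ?f x (\<pi> i) * ?f y (\<pi> j) * lsc L' (\<pi> i) (\<pi> j) (\<pi> m))"
      using reindex[of "\<lambda>i. \<Sum>j<n. ?f x i * ?f y (\<pi> j) * lsc L' i (\<pi> j) (\<pi> m)"]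
        reindex[of "\<lambda>j. ?f x _ * ?f y j * lsc L' _ j (\<pi> m)"] by simp
    also have "\<dots> = (\<Sum>i<n. \<Sum>j<n. x i * y j * (s i * s j * lsc L' (\<pi> i) (\<pi> j) (\<pi> m)))"
      using bij by (intro sum.cong refl) (simp add: monomial_map_apply n_def mult_ac)
    also have "\<dots> = (\<Sum>i<n. \<Sum>j<n. x i * y j * (s m * lsc L i j m))"
      using sc m by (intro sum.cong refl) (simp add: n_def)
    also have "\<dots> = s m * lbr L x y m"
      using m by (simp add: lbr_def n_def sum_distrib_left mult_ac)
    also have "\<dots> = ?f (lbr L x y) k"
      using bij m by (simp add: monomial_map_apply n_def)
    finally show ?thesis .
  qed
qed

lemma lie_iso_if_monomial_iso:
  assumes "monomial_iso L L'"
  shows "lie_iso L L'"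
proof -
  from assms obtain \<pi> s where dim: "ldim L = ldim L'"
    and bij: "bij_betw \<pi> {..<ldim L} {..<ldim L}" and nonzero: "\<forall>i<ldim L. s i \<noteq> 0"
    and sc: "\<forall>i<ldim L. \<forall>j<ldim L. \<forall>k<ldim L.
               s i * s j * lsc L' (\<pi> i) (\<pi> j) (\<pi> k) = s k * lsc L i j k"
    unfolding monomial_iso_def by blast
  let ?f = "monomial_map (ldim L) \<pi> s"
  have vecs: "lvecs L = {x. \<forall>k\<ge>ldim L. x k = 0}" "lvecs L' = {x. \<forall>k\<ge>ldim L. x k = 0}"
    using dim by (auto simp: lvecs_def)
  show ?thesis unfolding lie_iso_def
  proof (intro exI[of _ ?f] conjI ballI allI)
    show "bij_betw ?f (lvecs L) (lvecs L')"
      unfolding vecs using bij nonzero by (rule bij_betw_monomial_map)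
    show "?f (x + y) = ?f x + ?f y" for x y
      by (simp add: monomial_map_def fun_eq_iff distrib_left)
    show "?f (cscale c x) = cscale c (?f x)" for c x
      by (simp add: monomial_map_def fun_eq_iff cscale_def)
    show "?f (lbr L x y) = lbr L' (?f x) (?f y)" for x y
      using lbr_monomial_map[OF bij dim[symmetric] sc] by simp
  qed
qed

lemma monomial_iso_refl: "monomial_iso L L"
  unfolding monomial_iso_def by (intro conjI exI[of _ id] exI[of _ "\<lambda>_. 1"]) auto

lemma monomial_iso_trans [trans]:
  assumes "monomial_iso L1 L2" "monomial_iso L2 L3"
  shows "monomial_iso L1 L3"
proof -
  from assms(1) obtain \<pi> s where dim12: "ldim L1 = ldim L2" "lgen L1 = lgen L2"
    and \<pi>: "bij_betw \<pi> {..<ldim L1} {..<ldim L1}"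
      "\<forall>i<ldim L1. (\<pi> i < lgen L1 \<longleftrightarrow> i < lgen L1) \<and> s i \<noteq> 0"
    and sc12: "\<forall>i<ldim L1. \<forall>j<ldim L1. \<forall>k<ldim L1.
               s i * s j * lsc L2 (\<pi> i) (\<pi> j) (\<pi> k) = s k * lsc L1 i j k"
    unfolding monomial_iso_def by blast
  from assms(2) obtain \<rho> t where dim23: "ldim L2 = ldim L3" "lgen L2 = lgen L3"
    and \<rho>: "bij_betw \<rho> {..<ldim L2} {..<ldim L2}"
      "\<forall>i<ldim L2. (\<rho> i < lgen L2 \<longleftrightarrow> i < lgen L2) \<and> t i \<noteq> 0"
    and sc23: "\<forall>i<ldim L2. \<forall>j<ldim L2. \<forall>k<ldim L2.
               t i * t j * lsc L3 (\<rho> i) (\<rho> j) (\<rho> k) = t k * lsc L2 i j k"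
    unfolding monomial_iso_def by blast
  have \<pi>_less: "i < ldim L1 \<Longrightarrow> \<pi> i < ldim L1" for i
    using bij_betw_apply[OF \<pi>(1)] by simp
  show ?thesis unfolding monomial_iso_def
  proof (intro conjI exI[of _ "\<rho> \<circ> \<pi>"] exI[of _ "\<lambda>i. s i * t (\<pi> i)"] allI impI)
    fix i j k assume ijk: "i < ldim L1" "j < ldim L1" "k < ldim L1"
    have "s i * t (\<pi> i) * (s j * t (\<pi> j)) * lsc L3 (\<rho> (\<pi> i)) (\<rho> (\<pi> j)) (\<rho> (\<pi> k))
        = s i * s j * (t (\<pi> i) * t (\<pi> j) * lsc L3 (\<rho> (\<pi> i)) (\<rho> (\<pi> j)) (\<rho> (\<pi> k)))"
      by (simp add: mult_ac)
    also have "\<dots> = t (\<pi> k) * (s i * s j * lsc L2 (\<pi> i) (\<pi> j) (\<pi> k))"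
      using sc23 \<pi>_less ijk dim12 by (simp add: mult_ac)
    also have "\<dots> = s k * t (\<pi> k) * lsc L1 i j k"
      using sc12 ijk by simp
    finally show "s i * t (\<pi> i) * (s j * t (\<pi> j)) * lsc L3 ((\<rho> \<circ> \<pi>) i) ((\<rho> \<circ> \<pi>) j) ((\<rho> \<circ> \<pi>) k)
        = s k * t (\<pi> k) * lsc L1 i j k" by simp
  qed (use dim12 dim23 \<pi> \<rho> \<pi>_less in \<open>auto intro: bij_betw_trans\<close>)
qed

text \<open>enc and enc' label the bases of L and L' by S; the basis vector enc a is sent to
  scale a times the basis vector enc' a.\<close>

lemma monomial_isoI:
  assumes bij_enc: "bij_betw enc S {..<ldim L}"
    and inj_enc': "inj_on enc' S" and enc'_less: "\<And>a. a \<in> S \<Longrightarrow> enc' a < ldim L"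
    and dim: "ldim L = ldim L'" and gen: "lgen L = lgen L'"
    and gen_iff: "\<And>a. a \<in> S \<Longrightarrow> enc' a < lgen L \<longleftrightarrow> enc a < lgen L"
    and nonzero: "\<And>a. a \<in> S \<Longrightarrow> scale a \<noteq> 0"
    and sc: "\<And>a b c. a \<in> S \<Longrightarrow> b \<in> S \<Longrightarrow> c \<in> S \<Longrightarrow>
       scale a * scale b * lsc L' (enc' a) (enc' b) (enc' c) = scale c * lsc L (enc a) (enc b) (enc c)"
  shows "monomial_iso L L'"
proof -
  define dec where "dec = inv_into S enc"
  have dec: "bij_betw dec {..<ldim L} S"
    unfolding dec_def using bij_enc by (rule bij_betw_inv_into)
  have dec_in: "i < ldim L \<Longrightarrow> dec i \<in> S" for i
    using bij_betw_apply[OF dec] by simp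
  have enc_dec: "i < ldim L \<Longrightarrow> enc (dec i) = i" for i
    unfolding dec_def using bij_enc by (simp add: bij_betw_inv_into_right)
  have "inj_on (enc' \<circ> dec) {..<ldim L}"
    using dec inj_enc' by (intro comp_inj_on) (auto simp: bij_betw_def)
  moreover have "(enc' \<circ> dec) ` {..<ldim L} \<subseteq> {..<ldim L}"
    using dec_in enc'_less by auto
  ultimately have bij: "bij_betw (enc' \<circ> dec) {..<ldim L} {..<ldim L}"
    by (metis bij_betw_def endo_inj_surj finite_lessThan)
  show ?thesis unfolding monomial_iso_def
  proof (intro conjI exI[of _ "enc' \<circ> dec"] exI[of _ "scale \<circ> dec"] allI impI bij)
    fix i j k assume "i < ldim L" "j < ldim L" "k < ldim L"
    then show "(scale \<circ> dec) i * (scale \<circ> dec) j * lsc L' ((enc' \<circ> dec) i) ((enc' \<circ> dec) j) ((enc' \<circ> dec) k)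
        = (scale \<circ> dec) k * lsc L i j k"
      using sc[OF dec_in dec_in dec_in] enc_dec by simp
  qed (use dim gen dec_in gen_iff enc_dec nonzero in auto)
qed

fun pidx_swap :: "pidx \<Rightarrow> pidx" where
  "pidx_swap (P1 i) = P2 i"
| "pidx_swap (P2 j) = P1 j"
| "pidx_swap (PZ a b) = PZ b a"
| "pidx_swap PNone = PNone"

fun pidx_swap_sign :: "pidx \<Rightarrow> complex" where
  "pidx_swap_sign (PZ a b) = -1"
| "pidx_swap_sign _ = 1"

lemma pidx_swap_swap [simp]: "pidx_swap (pidx_swap l) = l"
  by (cases l) auto

lemma pidx_valid_swap [simp]: "pidx_valid L2 L1 (pidx_swap l) \<longleftrightarrow> pidx_valid L1 L2 l"
  by (cases l) auto

lemma pidx_is_gen_swap [simp]: "pidx_is_gen L2 L1 (pidx_swap l) \<longleftrightarrow> pidx_is_gen L1 L2 l"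
  by (cases l) auto

lemma gprod_sc_swap:
  "pidx_swap_sign a * pidx_swap_sign b * gprod_sc L2 L1 (pidx_swap a) (pidx_swap b) (pidx_swap c)
    = pidx_swap_sign c * gprod_sc L1 L2 a b c"
  by (cases a; cases b; cases c) (auto simp: gprod_sc_def)

lemma monomial_iso_gprod_commute:
  assumes gen_le_dim: "lgen A \<le> ldim A" "lgen B \<le> ldim B"
  shows "monomial_iso (gprod A B) (gprod B A)"
proof (rule monomial_isoI[where S = "{l. pidx_valid A B l}" and enc = "pencode A B"
      and enc' = "pencode B A \<circ> pidx_swap" and scale = pidx_swap_sign])
  note gen_le_dim' = gen_le_dim(2,1)
  show "bij_betw (pencode A B) {l. pidx_valid A B l} {..<ldim (gprod A B)}"
    by (rule bij_betw_pencode[OF gen_le_dim])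
  show "inj_on (pencode B A \<circ> pidx_swap) {l. pidx_valid A B l}"
    by (rule inj_onI) (metis comp_apply mem_Collect_eq pencode_inj_iff[OF gen_le_dim']
        pidx_swap_swap pidx_valid_swap)
  show "(pencode B A \<circ> pidx_swap) a < ldim (gprod A B)" if "a \<in> {l. pidx_valid A B l}" for a
    using pencode_less_ldim[OF gen_le_dim', of "pidx_swap a"] that by (simp add: ac_simps)
  show "ldim (gprod A B) = ldim (gprod B A)" "lgen (gprod A B) = lgen (gprod B A)"
    by simp_all
  show "(pencode B A \<circ> pidx_swap) a < lgen (gprod A B) \<longleftrightarrow> pencode A B a < lgen (gprod A B)"
    if "a \<in> {l. pidx_valid A B l}" for a
    using pencode_less_lgen_iff[OF gen_le_dim', of "pidx_swap a"]
      pencode_less_lgen_iff[OF gen_le_dim, of a] that by (simp add: ac_simps)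
  show "pidx_swap_sign a \<noteq> 0" for a
    by (cases a) auto
  show "pidx_swap_sign a * pidx_swap_sign b * lsc (gprod B A) ((pencode B A \<circ> pidx_swap) a)
      ((pencode B A \<circ> pidx_swap) b) ((pencode B A \<circ> pidx_swap) c)
    = pidx_swap_sign c * lsc (gprod A B) (pencode A B a) (pencode A B b) (pencode A B c)"
    if "a \<in> {l. pidx_valid A B l}" "b \<in> {l. pidx_valid A B l}" "c \<in> {l. pidx_valid A B l}"
    for a b c
    using that gprod_sc_swap[of a b B A c]
    by (simp add: lsc_gprod_pencode[OF gen_le_dim] lsc_gprod_pencode[OF gen_le_dim'])
qed

fun pidx_lift_left :: "(nat \<Rightarrow> nat) \<Rightarrow> pidx \<Rightarrow> pidx" where
  "pidx_lift_left \<pi> (P1 i) = P1 (\<pi> i)"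
| "pidx_lift_left \<pi> (P2 j) = P2 j"
| "pidx_lift_left \<pi> (PZ a b) = PZ (\<pi> a) b"
| "pidx_lift_left \<pi> PNone = PNone"

fun pidx_lift_scale :: "(nat \<Rightarrow> complex) \<Rightarrow> pidx \<Rightarrow> complex" where
  "pidx_lift_scale s (P1 i) = s i"
| "pidx_lift_scale s (PZ a b) = s a"
| "pidx_lift_scale s _ = 1"

lemma gprod_sc_lift_left:
  assumes bij: "bij_betw \<pi> {..<ldim A} {..<ldim A}"
    and gen: "\<forall>i<ldim A. \<pi> i < lgen A \<longleftrightarrow> i < lgen A"
    and gen_le_dim: "lgen A \<le> ldim A" and gen_eq: "lgen A' = lgen A"
    and sc: "\<forall>i<ldim A. \<forall>j<ldim A. \<forall>k<ldim A.
               s i * s j * lsc A' (\<pi> i) (\<pi> j) (\<pi> k) = s k * lsc A i j k"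
    and valid: "pidx_valid A B a" "pidx_valid A B b" "pidx_valid A B c"
  shows "pidx_lift_scale s a * pidx_lift_scale s b
      * gprod_sc A' B (pidx_lift_left \<pi> a) (pidx_lift_left \<pi> b) (pidx_lift_left \<pi> c)
    = pidx_lift_scale s c * gprod_sc A B a b c"
proof -
  have inj: "\<pi> i = \<pi> i' \<longleftrightarrow> i = i'" if "i < ldim A" "i' < ldim A" for i i'
    using bij_betw_imp_inj_on[OF bij] that by (auto dest: inj_onD)
  show ?thesis
    using valid sc gen gen_le_dim gen_eq inj by (cases a; cases b; cases c) (auto simp: gprod_sc_def)
qed

lemma monomial_iso_gprod_cong_left:
  assumes gen_le_dim: "lgen A \<le> ldim A" "lgen B \<le> ldim B" and iso: "monomial_iso A A'"
  shows "monomial_iso (gprod A B) (gprod A' B)"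
proof -
  from iso obtain \<pi> s where dim: "ldim A = ldim A'" "lgen A = lgen A'"
    and bij: "bij_betw \<pi> {..<ldim A} {..<ldim A}"
    and gen: "\<forall>i<ldim A. \<pi> i < lgen A \<longleftrightarrow> i < lgen A" and nonzero: "\<forall>i<ldim A. s i \<noteq> 0"
    and sc: "\<forall>i<ldim A. \<forall>j<ldim A. \<forall>k<ldim A.
               s i * s j * lsc A' (\<pi> i) (\<pi> j) (\<pi> k) = s k * lsc A i j k"
    unfolding monomial_iso_def by blast
  have gen_le_dim': "lgen A' \<le> ldim A'" "lgen B \<le> ldim B"
    using gen_le_dim dim by simp_all
  have \<pi>_less: "i < ldim A \<Longrightarrow> \<pi> i < ldim A" for i
    using bij_betw_apply[OF bij] by simp
  have inj: "\<pi> i = \<pi> i' \<longleftrightarrow> i = i'" if "i < ldim A" "i' < ldim A" for i i'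
    using bij_betw_imp_inj_on[OF bij] that by (auto dest: inj_onD)
  have valid: "pidx_valid A' B (pidx_lift_left \<pi> l)" if "pidx_valid A B l" for l
    using that dim \<pi>_less gen gen_le_dim(1) by (cases l) auto
  show ?thesis
  proof (rule monomial_isoI[where S = "{l. pidx_valid A B l}" and enc = "pencode A B"
        and enc' = "pencode A' B \<circ> pidx_lift_left \<pi>" and scale = "pidx_lift_scale s"])
    show "bij_betw (pencode A B) {l. pidx_valid A B l} {..<ldim (gprod A B)}"
      by (rule bij_betw_pencode[OF gen_le_dim])
    show "inj_on (pencode A' B \<circ> pidx_lift_left \<pi>) {l. pidx_valid A B l}"
    proof (rule inj_onI)
      fix l l' assume l: "l \<in> {l. pidx_valid A B l}" "l' \<in> {l. pidx_valid A B l}"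
        and "(pencode A' B \<circ> pidx_lift_left \<pi>) l = (pencode A' B \<circ> pidx_lift_left \<pi>) l'"
      then have "pidx_lift_left \<pi> l = pidx_lift_left \<pi> l'"
        using pencode_inj_iff[OF gen_le_dim'] valid by simp
      then show "l = l'"
        using l inj gen_le_dim(1) by (cases l; cases l') auto
    qed
    show "(pencode A' B \<circ> pidx_lift_left \<pi>) l < ldim (gprod A B)" if "l \<in> {l. pidx_valid A B l}" for l
      using pencode_less_ldim[OF gen_le_dim' valid] that dim by simp
    show "ldim (gprod A B) = ldim (gprod A' B)" "lgen (gprod A B) = lgen (gprod A' B)"
      using dim by simp_all
    show "(pencode A' B \<circ> pidx_lift_left \<pi>) l < lgen (gprod A B) \<longleftrightarrow> pencode A B l < lgen (gprod A B)"
      if "l \<in> {l. pidx_valid A B l}" for l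
    proof -
      have "pidx_is_gen A' B (pidx_lift_left \<pi> l) \<longleftrightarrow> pidx_is_gen A B l"
        using that gen dim by (cases l) auto
      then show ?thesis
        using pencode_less_lgen_iff[OF gen_le_dim' valid] pencode_less_lgen_iff[OF gen_le_dim]
          that dim by simp
    qed
    show "pidx_lift_scale s l \<noteq> 0" if "l \<in> {l. pidx_valid A B l}" for l
      using that nonzero gen_le_dim(1) by (cases l) auto
    show "pidx_lift_scale s a * pidx_lift_scale s b * lsc (gprod A' B) ((pencode A' B \<circ> pidx_lift_left \<pi>) a)
        ((pencode A' B \<circ> pidx_lift_left \<pi>) b) ((pencode A' B \<circ> pidx_lift_left \<pi>) c)
      = pidx_lift_scale s c * lsc (gprod A B) (pencode A B a) (pencode A B b) (pencode A B c)"
      if "a \<in> {l. pidx_valid A B l}" "b \<in> {l. pidx_valid A B l}" "c \<in> {l. pidx_valid A B l}"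
      for a b c
      using that gprod_sc_lift_left[OF bij gen gen_le_dim(1) dim(2)[symmetric] sc] valid
        lsc_gprod_pencode[OF gen_le_dim] lsc_gprod_pencode[OF gen_le_dim']
      by simp
  qed
qed

fun pidx_assoc :: "liealg \<Rightarrow> liealg \<Rightarrow> liealg \<Rightarrow> pidx \<Rightarrow> pidx" where
  "pidx_assoc A B C (P1 q) = (case pdecode A B q of
       P1 i \<Rightarrow> P1 i
     | P2 j \<Rightarrow> P2 (pencode B C (P1 j))
     | PZ i j \<Rightarrow> PZ i (pencode B C (P1 j))
     | PNone \<Rightarrow> PNone)"
| "pidx_assoc A B C (P2 k) = P2 (pencode B C (P2 k))"
| "pidx_assoc A B C (PZ q k) = (case pdecode A B q of
       P1 i \<Rightarrow> PZ i (pencode B C (P2 k))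
     | P2 j \<Rightarrow> P2 (pencode B C (PZ j k))
     | _ \<Rightarrow> PNone)"
| "pidx_assoc A B C PNone = PNone"

context
  fixes A B C :: liealg
  assumes gen_le_dim: "lgen A \<le> ldim A" "lgen B \<le> ldim B" "lgen C \<le> ldim C"
begin

lemma pidx_valid_gprod_left_cases:
  assumes valid: "pidx_valid (gprod A B) C l"
  shows "(\<exists>i<ldim A. l = P1 (pencode A B (P1 i)))
    \<or> (\<exists>j<ldim B. l = P1 (pencode A B (P2 j)))
    \<or> (\<exists>i<lgen A. \<exists>j<lgen B. l = P1 (pencode A B (PZ i j)))
    \<or> (\<exists>k<ldim C. l = P2 k)
    \<or> (\<exists>i<lgen A. \<exists>k<lgen C. l = PZ (pencode A B (P1 i)) k)
    \<or> (\<exists>j<lgen B. \<exists>k<lgen C. l = PZ (pencode A B (P2 j)) k)"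
proof (cases l)
  case (P1 q)
  then have "q < ldim (gprod A B)" using valid by simp
  then have "pidx_valid A B (pdecode A B q)" "q = pencode A B (pdecode A B q)"
    using pdecode_valid_inverse[OF gen_le_dim(1,2)] by simp_all
  then show ?thesis using P1 by (cases "pdecode A B q") auto
next
  case (PZ q k)
  then have q: "q < lgen A + lgen B" "k < lgen C" using valid by auto
  then have "q < ldim (gprod A B)" using gen_le_dim by simp
  then have m: "pidx_valid A B (pdecode A B q)" "q = pencode A B (pdecode A B q)"
    using pdecode_valid_inverse[OF gen_le_dim(1,2)] by simp_all
  then have "pidx_is_gen A B (pdecode A B q)"
    using pencode_less_lgen_iff[OF gen_le_dim(1,2) m(1)] q(1) m(2) by simp
  then show ?thesis using m PZ q by (cases "pdecode A B q") auto
qed (use valid in auto)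

lemmas assoc_index_simps = pdecode_pencode[OF gen_le_dim(1,2)]
  pencode_less_lgen_iff[OF gen_le_dim(1,2)] pencode_less_lgen_iff[OF gen_le_dim(2,3)]
  pencode_inj_iff[OF gen_le_dim(1,2)] pencode_inj_iff[OF gen_le_dim(2,3)]
  pencode_less_ldim[OF gen_le_dim(1,2)] pencode_less_ldim[OF gen_le_dim(2,3)]
  lsc_gprod_pencode[OF gen_le_dim(1,2)] lsc_gprod_pencode[OF gen_le_dim(2,3)]
  order.strict_trans2[OF _ gen_le_dim(1)] order.strict_trans2[OF _ gen_le_dim(2)]
  order.strict_trans2[OF _ gen_le_dim(3)]

lemma pidx_valid_assoc:
  assumes "pidx_valid (gprod A B) C l"
  shows "pidx_valid A (gprod B C) (pidx_assoc A B C l)"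
  using pidx_valid_gprod_left_cases[OF assms]
  by (elim disjE exE conjE) (simp_all add: assoc_index_simps del: pencode.simps ldim_gprod)

lemma pidx_is_gen_assoc:
  assumes "pidx_valid (gprod A B) C l"
  shows "pidx_is_gen A (gprod B C) (pidx_assoc A B C l) \<longleftrightarrow> pidx_is_gen (gprod A B) C l"
  using pidx_valid_gprod_left_cases[OF assms]
  by (elim disjE exE conjE) (simp_all add: assoc_index_simps del: pencode.simps ldim_gprod)

lemma inj_on_pidx_assoc: "inj_on (pidx_assoc A B C) {l. pidx_valid (gprod A B) C l}"
proof (rule inj_onI)
  fix l l' assume "l \<in> {l. pidx_valid (gprod A B) C l}" "l' \<in> {l. pidx_valid (gprod A B) C l}"
    and eq: "pidx_assoc A B C l = pidx_assoc A B C l'"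
  then have "pidx_valid (gprod A B) C l" "pidx_valid (gprod A B) C l'"
    by simp_all
  from this[THEN pidx_valid_gprod_left_cases] show "l = l'"
    using eq by (elim disjE exE conjE) (simp_all add: assoc_index_simps del: pencode.simps ldim_gprod)
qed

lemma gprod_sc_assoc:
  assumes "pidx_valid (gprod A B) C a" "pidx_valid (gprod A B) C b" "pidx_valid (gprod A B) C c"
  shows "gprod_sc A (gprod B C) (pidx_assoc A B C a) (pidx_assoc A B C b) (pidx_assoc A B C c)
    = gprod_sc (gprod A B) C a b c"
  using pidx_valid_gprod_left_cases[OF assms(1)] pidx_valid_gprod_left_cases[OF assms(2)]
    pidx_valid_gprod_left_cases[OF assms(3)]
  by (elim disjE exE conjE)
    (simp_all add: assoc_index_simps gprod_sc_def del: pencode.simps ldim_gprod)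

lemma monomial_iso_gprod_assoc: "monomial_iso (gprod (gprod A B) C) (gprod A (gprod B C))"
proof -
  have gen_le_dim_AB: "lgen (gprod A B) \<le> ldim (gprod A B)"
    and gen_le_dim_BC: "lgen (gprod B C) \<le> ldim (gprod B C)"
    using gen_le_dim by simp_all
  let ?S = "{l. pidx_valid (gprod A B) C l}"
  let ?enc' = "pencode A (gprod B C) \<circ> pidx_assoc A B C"
  have valid: "pidx_valid A (gprod B C) (pidx_assoc A B C l)" if "l \<in> ?S" for l
    using that pidx_valid_assoc by simp
  show ?thesis
  proof (rule monomial_isoI[where S = ?S and enc = "pencode (gprod A B) C" and enc' = ?enc'
        and scale = "\<lambda>_. 1"])
    show "bij_betw (pencode (gprod A B) C) ?S {..<ldim (gprod (gprod A B) C)}"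
      by (rule bij_betw_pencode[OF gen_le_dim_AB gen_le_dim(3)])
    have "inj_on (pencode A (gprod B C)) (pidx_assoc A B C ` ?S)"
      using bij_betw_imp_inj_on[OF bij_betw_pencode[OF gen_le_dim(1) gen_le_dim_BC]]
    proof (rule inj_on_subset)
      show "pidx_assoc A B C ` ?S \<subseteq> {l. pidx_valid A (gprod B C) l}"
        using valid by auto
    qed
    then show "inj_on ?enc' ?S"
      using inj_on_pidx_assoc by (rule comp_inj_on[rotated])
    show dim: "ldim (gprod (gprod A B) C) = ldim (gprod A (gprod B C))"
      by (simp add: algebra_simps)
    show "?enc' l < ldim (gprod (gprod A B) C)" if "l \<in> ?S" for l
      unfolding dim o_apply using gen_le_dim(1) gen_le_dim_BC valid[OF that]
      by (rule pencode_less_ldim)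
    show "lgen (gprod (gprod A B) C) = lgen (gprod A (gprod B C))"
      by simp
    show "?enc' l < lgen (gprod (gprod A B) C) \<longleftrightarrow> pencode (gprod A B) C l < lgen (gprod (gprod A B) C)"
      if "l \<in> ?S" for l
      using pencode_less_lgen_iff[OF gen_le_dim(1) gen_le_dim_BC valid[OF that]]
        pencode_less_lgen_iff[OF gen_le_dim_AB gen_le_dim(3), of l] pidx_is_gen_assoc[of l] that
      by (simp add: add.assoc del: pencode.simps ldim_gprod)
    show "(1::complex) \<noteq> 0"
      by simp
    show "1 * 1 * lsc (gprod A (gprod B C)) (?enc' a) (?enc' b) (?enc' c)
      = 1 * lsc (gprod (gprod A B) C) (pencode (gprod A B) C a) (pencode (gprod A B) C b)
          (pencode (gprod A B) C c)"
      if "a \<in> ?S" "b \<in> ?S" "c \<in> ?S" for a b c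
      using that gprod_sc_assoc[of a b c]
      by (simp add: lsc_gprod_pencode[OF gen_le_dim(1) gen_le_dim_BC valid valid valid]
          lsc_gprod_pencode[OF gen_le_dim_AB gen_le_dim(3)] del: pencode.simps ldim_gprod)
  qed
qed

end

lemma iprod_snoc: "xs \<noteq> [] \<Longrightarrow> iprod (xs @ [x]) = gprod (iprod xs) x"
  by (cases xs) (simp_all add: iprod_def)

lemma gen_le_dim_iprod:
  assumes "xs \<noteq> []" "\<forall>g\<in>set xs. lgen g \<le> ldim g"
  shows "lgen (iprod xs) \<le> ldim (iprod xs)"
  using assms
proof (induction xs rule: rev_induct)
  case (snoc x xs)
  show ?case
  proof (cases "xs = []")
    case True
    then show ?thesis using snoc.prems by (simp add: iprod_def)
  next
    case False
    then show ?thesis using snoc by (simp add: iprod_snoc)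
  qed
qed simp

lemma monomial_iso_iprod_Cons:
  assumes "\<forall>g\<in>set (g1 # g2 # gs). lgen g \<le> ldim g"
  shows "monomial_iso (iprod (g1 # g2 # gs)) (gprod g1 (iprod (g2 # gs)))"
  using assms
proof (induction gs rule: rev_induct)
  case Nil
  then show ?case by (simp add: iprod_def monomial_iso_refl)
next
  case (snoc h gs)
  have gen_le_dim: "\<forall>g\<in>set (g1 # g2 # gs). lgen g \<le> ldim g"
      "lgen h \<le> ldim h" "lgen g1 \<le> ldim g1"
    using snoc.prems by auto
  have gen_le_dim_iprod: "lgen (iprod (g1 # g2 # gs)) \<le> ldim (iprod (g1 # g2 # gs))"
      "lgen (iprod (g2 # gs)) \<le> ldim (iprod (g2 # gs))"
    using gen_le_dim by (auto intro!: gen_le_dim_iprod simp del: ldim_gprod lgen_gprod)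
  have "iprod (g1 # g2 # gs @ [h]) = gprod (iprod (g1 # g2 # gs)) h"
    using iprod_snoc[of "g1 # g2 # gs" h] by simp
  also have "monomial_iso \<dots> (gprod (gprod g1 (iprod (g2 # gs))) h)"
    using gen_le_dim_iprod(1) gen_le_dim(2) snoc.IH[OF gen_le_dim(1)]
    by (rule monomial_iso_gprod_cong_left)
  also have "monomial_iso \<dots> (gprod g1 (gprod (iprod (g2 # gs)) h))"
    using gen_le_dim(3) gen_le_dim_iprod(2) gen_le_dim(2) by (rule monomial_iso_gprod_assoc)
  also have "gprod g1 (gprod (iprod (g2 # gs)) h) = gprod g1 (iprod (g2 # gs @ [h]))"
    using iprod_snoc[of "g2 # gs" h] by simp
  finally show ?case .
qed

theorem mainTheorem5:
  fixes gs :: "liealg list"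
  assumes "length gs \<ge> 2"
    and "\<forall>g\<in>set gs. good_nilpotent g"
  shows "lie_iso (gprod (gs ! 0) (gs ! 1)) (gprod (gs ! 1) (gs ! 0))
       \<and> lie_iso (gprod (iprod (butlast gs)) (last gs)) (gprod (hd gs) (iprod (tl gs)))"
proof -
  from assms(1) obtain g1 g2 rest where gs: "gs = g1 # g2 # rest"
    by (metis One_nat_def Suc_1 Suc_le_length_iff)
  have gen_le_dim: "\<forall>g\<in>set gs. lgen g \<le> ldim g"
    using assms(2) by (auto simp: good_nilpotent_def adapted_basis_def)
  have "monomial_iso (gprod (gs ! 0) (gs ! 1)) (gprod (gs ! 1) (gs ! 0))"
    using gen_le_dim gs by (simp add: monomial_iso_gprod_commute)
  moreover have "monomial_iso (iprod gs) (gprod (hd gs) (iprod (tl gs)))"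
    using gen_le_dim gs by (simp add: monomial_iso_iprod_Cons)
  moreover have "iprod gs = gprod (iprod (butlast gs)) (last gs)"
    using iprod_snoc[of "butlast gs" "last gs"] gs
    by (metis append_butlast_last_id butlast.simps(2) list.distinct(1))
  ultimately show ?thesis
    by (metis lie_iso_if_monomial_iso)
qed

end
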